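(* Consider the principal–agent model described in the context, and define \[ \mathcal{J} \;=\; \left\{ (a,u)\;\middle|\; a>0,\ u\ge u_0,\ \sup_{x\in(L(a),\bar x]} \frac{f_a(x\mid a)}{f(x\mid a)} \;\ge\; \frac{c'(a)}{c(a)+u}\right\} \;\cup\; \{(0,u)\mid u\ge u_0\}. \] Then: (1) Every implementable effort–utility pair belongs to $\mathcal{J}$, i.e. $\mathcal{I}\subseteq\mathcal{J}$, where $\mathcal{I}$ is the implementable set. (2) There exists $(a,u)\in\mathcal{J}$ that solves \[ \max_{(a,u)\in\mathcal{J}} \Big\{ \mathbb{E}[X(a)\mid a]-c(a)-u \Big\}. \qquad (\ast) \] (3) If $(a^{\mathcal J},u^{\mathcal J})$ is a maximizer of $(\ast)$, then any contract that implements $(a^{\mathcal J},u^{\mathcal J})$ is an optimal solution of the principal's original problem (OP).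
   Context: Model. An agent chooses effort $a\ge 0$. The outcome $X(a)$ is a continuous random variable with support $[L(a),\bar x]$, where $\bar x>0$ is fixed (possibly $+\infty$) and $L:[0,\infty)\to[0,\bar x)$ is nondecreasing on $[0,\infty)$ and continuously differentiable on $(0,\infty)$. Effort costs $c(a)$, where $c:[0,\infty)\to[0,\infty)$ is twice differentiable with $c'(a)>0$, $c''(a)\ge 0$ for all $a\ge0$. $X(a)$ has density $f(x\mid a)$ and cdf $F(x\mid a)$; for each fixed $x\in(L(a),\bar x]$, $f(x\mid a)$ and $F(x\mid a)$ are differentiable in $a>0$ with derivatives $f_a,F_a$, both continuous on $(L(a),\bar x]\times(0,\infty)$, and $F_a<0$ there. A contract is a function $s:\mathbb{R}_{\ge0}\to\mathbb{R}_{\ge0}$ (limited liability, LL: $s(x)\ge0$ for all $x\ge0$). The principal's expected utility is $E^P(a,s)=\int_{L(a)}^{\bar x}[x-s(x)]f(x\mid a)\,dx$ and the agent's is $E^A(a,s)=\int_{L(a)}^{\bar x}s(x)f(x\mid a)\,dx-c(a)$. The agent has reservation utility $u_0\ge0$. The original problem (OP) is: maximize $E^P(a_s,s)$ over $(a_s,s)$ subject to (IC) $a_s\in\arg\max_{a\ge0}E^A(a,s)$, (IR) $E^A(a_s,s)\ge u_0$, and (LL). When the agent is indifferent among several efforts, he chooses the one most favorable to the principal. Standing assumption: (i) for all $a\ge0$, $\mathbb{E}[X(a)\mid a]<\infty$ and $a\mapsto\mathbb{E}[X(a)\mid a]$ is continuous on $[0,\infty)$; (ii) $\lim_{a\to\infty}\{\mathbb{E}[X(a)\mid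 a]-c(a)\}=-\infty$; (iii) $a\mapsto\sup_{x\in(L(a),\bar x]} f_a(x\mid a)/f(x\mid a)$ is continuous on $(0,\infty)$; (iv) for any contract $s$ with $\mathbb{E}[s(X(a))\mid a]<\infty$, $\lim_{h\uparrow0}\int_{L(a)}^{\bar x}\frac{f(x\mid a+h)-f(x\mid a)}{h}s(x)\,dx=\int_{L(a)}^{\bar x}\lim_{h\uparrow0}\frac{f(x\mid a+h)-f(x\mid a)}{h}s(x)\,dx$. Implementation: a contract $s$ implements $(a,u)$ if $(a,s)$ satisfies IC, IR and LL and $u=E^A(a,s)$ ($\ge u_0$). A pair is implementable if some contract implements it; the implementable set $\mathcal{I}$ is the set of all implementable pairs. *)

theory Defs
  imports "HOL-Analysis.Analysis"
begin

definition supp :: "(real \<Rightarrow> real) \<Rightarrow> ereal \<Rightarrow> real \<Rightarrow> real set" where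
  "supp L xbar a = {x. L a < x \<and> ereal x \<le> xbar}"

definition cdf :: "(real \<Rightarrow> real) \<Rightarrow> (real \<Rightarrow> real \<Rightarrow> real) \<Rightarrow> real \<Rightarrow> real \<Rightarrow> real" where
  "cdf L f x a = set_lebesgue_integral lborel {L a..x} (\<lambda>y. f y a)"

definition mean :: "(real \<Rightarrow> real) \<Rightarrow> ereal \<Rightarrow> (real \<Rightarrow> real \<Rightarrow> real) \<Rightarrow> real \<Rightarrow> real" where
  "mean L xbar f a = set_lebesgue_integral lborel (supp L xbar a) (\<lambda>x. x * f x a)"

definition pay :: "(real \<Rightarrow> real) \<Rightarrow> ereal \<Rightarrow> (real \<Rightarrow> real \<Rightarrow> real) \<Rightarrow> (real \<Rightarrow> real) \<Rightarrow> real \<Rightarrow> ereal" where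
  "pay L xbar f s a =
     enn2ereal (\<integral>\<^sup>+ x. indicator (supp L xbar a) x * ennreal (s x * f x a) \<partial>lborel)"

definition EA :: "(real \<Rightarrow> real) \<Rightarrow> ereal \<Rightarrow> (real \<Rightarrow> real \<Rightarrow> real) \<Rightarrow> (real \<Rightarrow> real)
                   \<Rightarrow> (real \<Rightarrow> real) \<Rightarrow> real \<Rightarrow> ereal" where
  "EA L xbar f c s a = pay L xbar f s a - ereal (c a)"

definition EP :: "(real \<Rightarrow> real) \<Rightarrow> ereal \<Rightarrow> (real \<Rightarrow> real \<Rightarrow> real) \<Rightarrow> (real \<Rightarrow> real) \<Rightarrow> real \<Rightarrow> ereal" where
  "EP L xbar f s a = ereal (mean L xbar f a) - pay L xbar f s a"

definition contract :: "(real \<Rightarrow> real) \<Rightarrow> bool" where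
  "contract s \<longleftrightarrow> s \<in> borel_measurable borel \<and> (\<forall>x\<ge>0. 0 \<le> s x)"

definition IC :: "(real \<Rightarrow> real) \<Rightarrow> ereal \<Rightarrow> (real \<Rightarrow> real \<Rightarrow> real) \<Rightarrow> (real \<Rightarrow> real)
                   \<Rightarrow> (real \<Rightarrow> real) \<Rightarrow> real \<Rightarrow> bool" where
  "IC L xbar f c s a \<longleftrightarrow> 0 \<le> a \<and> (\<forall>b\<ge>0. EA L xbar f c s b \<le> EA L xbar f c s a)"

definition IR :: "(real \<Rightarrow> real) \<Rightarrow> ereal \<Rightarrow> (real \<Rightarrow> real \<Rightarrow> real) \<Rightarrow> (real \<Rightarrow> real) \<Rightarrow> real
                   \<Rightarrow> (real \<Rightarrow> real) \<Rightarrow> real \<Rightarrow> bool" where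
  "IR L xbar f c u0 s a \<longleftrightarrow> ereal u0 \<le> EA L xbar f c s a"

definition feasible :: "(real \<Rightarrow> real) \<Rightarrow> ereal \<Rightarrow> (real \<Rightarrow> real \<Rightarrow> real) \<Rightarrow> (real \<Rightarrow> real) \<Rightarrow> real
                   \<Rightarrow> (real \<Rightarrow> real) \<Rightarrow> real \<Rightarrow> bool" where
  "feasible L xbar f c u0 s a \<longleftrightarrow>
     contract s \<and> IC L xbar f c s a \<and> IR L xbar f c u0 s a"

definition implements :: "(real \<Rightarrow> real) \<Rightarrow> ereal \<Rightarrow> (real \<Rightarrow> real \<Rightarrow> real) \<Rightarrow> (real \<Rightarrow> real) \<Rightarrow> real
                   \<Rightarrow> (real \<Rightarrow> real) \<Rightarrow> real \<Rightarrow> real \<Rightarrow> bool" where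
  "implements L xbar f c u0 s a u \<longleftrightarrow>
     feasible L xbar f c u0 s a \<and> EA L xbar f c s a = ereal u"

definition implementable_set :: "(real \<Rightarrow> real) \<Rightarrow> ereal \<Rightarrow> (real \<Rightarrow> real \<Rightarrow> real) \<Rightarrow> (real \<Rightarrow> real)
                   \<Rightarrow> real \<Rightarrow> (real \<times> real) set" where
  "implementable_set L xbar f c u0 = {(a, u). \<exists>s. implements L xbar f c u0 s a u}"

definition OP_optimal :: "(real \<Rightarrow> real) \<Rightarrow> ereal \<Rightarrow> (real \<Rightarrow> real \<Rightarrow> real) \<Rightarrow> (real \<Rightarrow> real) \<Rightarrow> real
                   \<Rightarrow> (real \<Rightarrow> real) \<Rightarrow> real \<Rightarrow> bool" where
  "OP_optimal L xbar f c u0 s a \<longleftrightarrow>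
     feasible L xbar f c u0 s a \<and>
     (\<forall>s' a'. feasible L xbar f c u0 s' a' \<longrightarrow> EP L xbar f s' a' \<le> EP L xbar f s a)"

text \<open>The relaxed set J; fa is the partial derivative of f in a, cd = c'.\<close>
definition Jset :: "(real \<Rightarrow> real) \<Rightarrow> ereal \<Rightarrow> (real \<Rightarrow> real \<Rightarrow> real) \<Rightarrow> (real \<Rightarrow> real \<Rightarrow> real)
                   \<Rightarrow> (real \<Rightarrow> real) \<Rightarrow> (real \<Rightarrow> real) \<Rightarrow> real \<Rightarrow> (real \<times> real) set" where
  "Jset L xbar f fa c cd u0 =
     {(a, u). 0 < a \<and> u0 \<le> u \<and>
        ereal (cd a / (c a + u)) \<le> (SUP x\<in>supp L xbar a. ereal (fa x a / f x a))}
     \<union> {(0, u) | u. u0 \<le> u}"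

end

theory Submission
  imports Defs
begin

(* (1) If s implements (a, u) with a > 0, incentive compatibility bounds every left
   difference quotient of the expected payment at a from below by that of c, so by
   assumption (iv) c'(a) is at most the integral of f_a s; bounding f_a / f by its
   supremum g(a) gives c'(a) <= g(a) (c(a) + u), which is membership in J.
   (2) For a > 0 the least rent u with (a, u) in J is max(u0, c'(a) / g(a) - c(a)), so
   the relaxed problem reduces to maximising a function of a alone. That function is
   continuous where g > 0 and tends to -infinity both as a grows and, since c' is
   bounded away from 0 on compact intervals, as g(a) tends to 0; so unless a = 0 is
   optimal, the maximum is attained on a compact set.
   (3) Since J contains every implementable pair, a contract implementing a maximiser
   over J is optimal for (OP). *)

lemma supp_borel [measurable]: "supp L xbar a \<in> sets borel"
proof -
  have "supp L xbar a = {L a<..} \<inter> {x. ereal x \<le> xbar}" by (auto simp: supp_def)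
  moreover have "{x. ereal x \<le> xbar} \<in> sets borel"
    by (cases xbar) (auto simp: atMost_def[symmetric])
  ultimately show ?thesis by simp
qed

lemma supp_antimono: "L b \<le> L a \<Longrightarrow> supp L xbar a \<subseteq> supp L xbar b"
  by (auto simp: supp_def)

lemma set_integrable_if_nn_integral_finite:
  fixes h :: "real \<Rightarrow> real"
  assumes [measurable]: "h \<in> borel_measurable borel" "T \<in> sets borel"
    and nonneg: "\<forall>x\<in>T. 0 \<le> h x"
    and finite: "(\<integral>\<^sup>+x. indicator T x * ennreal (h x) \<partial>lborel) < \<infinity>"
  shows "set_integrable lborel T h"
    and "(\<integral>\<^sup>+x. indicator T x * ennreal (h x) \<partial>lborel) = ennreal (set_lebesgue_integral lborel T h)"
    and "0 \<le> set_lebesgue_integral lborel T h"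
proof -
  let ?g = "\<lambda>x. indicator T x *\<^sub>R h x"
  have nn_eq: "(\<integral>\<^sup>+x. indicator T x * ennreal (h x) \<partial>lborel) = (\<integral>\<^sup>+x. ennreal (?g x) \<partial>lborel)"
    by (intro nn_integral_cong) (auto simp: indicator_def)
  have g_nonneg: "AE x in lborel. 0 \<le> ?g x" using nonneg by (auto simp: indicator_def)
  have "integrable lborel ?g"
    using finite nn_eq by (intro integrableI_nonneg g_nonneg) auto
  then show "set_integrable lborel T h"
    and "(\<integral>\<^sup>+x. indicator T x * ennreal (h x) \<partial>lborel) = ennreal (set_lebesgue_integral lborel T h)"
    using nn_integral_eq_integral[OF _ g_nonneg] nn_eq
    by (simp_all add: set_integrable_def set_lebesgue_integral_def)
  show "0 \<le> set_lebesgue_integral lborel T h"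
    unfolding set_lebesgue_integral_def by (rule integral_nonneg_AE[OF g_nonneg])
qed

lemma payoff_measurable:
  "contract s \<Longrightarrow> g \<in> borel_measurable borel \<Longrightarrow> (\<lambda>x. s x * g x) \<in> borel_measurable borel"
  by (intro borel_measurable_times) (auto simp: contract_def)

lemma payoff_nonneg:
  assumes "contract s" "0 \<le> L b" "\<forall>x\<in>supp L xbar b. 0 < f x b"
  shows "\<forall>x\<in>supp L xbar b. 0 \<le> s x * f x b"
proof
  fix x assume x: "x \<in> supp L xbar b"
  then have "0 \<le> s x" using assms(1,2) by (auto simp: contract_def supp_def)
  then show "0 \<le> s x * f x b" using assms(3) x by (simp add: less_imp_le)
qed

lemma set_integral_le_pay:
  assumes s: "contract s" and L_nonneg: "0 \<le> L b"
    and f_meas: "(\<lambda>x. f x b) \<in> borel_measurable borel"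
    and f_pos: "\<forall>x\<in>supp L xbar b. 0 < f x b"
    and pay_finite: "pay L xbar f s b < \<infinity>"
    and T: "T \<in> sets borel" "T \<subseteq> supp L xbar b"
  shows "set_integrable lborel T (\<lambda>x. s x * f x b)"
    and "ereal (set_lebesgue_integral lborel T (\<lambda>x. s x * f x b)) \<le> pay L xbar f s b"
proof -
  have [measurable]: "(\<lambda>x. s x * f x b) \<in> borel_measurable borel"
    by (rule payoff_measurable[OF s f_meas])
  have nonneg: "\<forall>x\<in>T. 0 \<le> s x * f x b"
    using T payoff_nonneg[of s L b xbar f] s L_nonneg f_pos by blast
  have le: "(\<integral>\<^sup>+x. indicator T x * ennreal (s x * f x b) \<partial>lborel)
      \<le> (\<integral>\<^sup>+x. indicator (supp L xbar b) x * ennreal (s x * f x b) \<partial>lborel)"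
    using T by (intro nn_integral_mono) (auto simp: indicator_def)
  also have "\<dots> < \<infinity>"
    using pay_finite by (simp add: pay_def less_top)
  finally have "(\<integral>\<^sup>+x. indicator T x * ennreal (s x * f x b) \<partial>lborel) < \<infinity>" .
  note T_int = set_integrable_if_nn_integral_finite[OF _ T(1) nonneg this]
  show "set_integrable lborel T (\<lambda>x. s x * f x b)" by (rule T_int(1)) simp
  show "ereal (set_lebesgue_integral lborel T (\<lambda>x. s x * f x b)) \<le> pay L xbar f s b"
    using le T_int(2,3) by (simp add: pay_def less_eq_ennreal.rep_eq)
qed

lemma pay_eq_set_integral:
  assumes "contract s" "0 \<le> L b" "(\<lambda>x. f x b) \<in> borel_measurable borel"
    and "\<forall>x\<in>supp L xbar b. 0 < f x b" "pay L xbar f s b < \<infinity>"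
  shows "pay L xbar f s b = ereal (set_lebesgue_integral lborel (supp L xbar b) (\<lambda>x. s x * f x b))"
proof -
  have [measurable]: "(\<lambda>x. s x * f x b) \<in> borel_measurable borel"
    by (rule payoff_measurable[OF assms(1,3)])
  have "\<forall>x\<in>supp L xbar b. 0 \<le> s x * f x b"
    using payoff_nonneg[of s L b xbar f] assms(1,2,4) by blast
  from set_integrable_if_nn_integral_finite(2,3)[OF _ _ this] assms(5) show ?thesis
    by (simp add: pay_def less_top)
qed

lemma pay_le_if_IC:
  assumes "IC L xbar f c s a" "EA L xbar f c s a = ereal u" "0 \<le> b"
  shows "pay L xbar f s b \<le> ereal (u + c b)"
proof -
  have "pay L xbar f s b - ereal (c b) \<le> ereal u"
    using assms by (auto simp: IC_def EA_def)
  then show ?thesis by (cases "pay L xbar f s b") (auto simp: algebra_simps)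
qed

lemma pay_eq_if_EA_eq:
  "EA L xbar f c s a = ereal u \<Longrightarrow> pay L xbar f s a = ereal (u + c a)"
  by (cases "pay L xbar f s a") (auto simp: EA_def)

lemma has_real_derivative_le_left_limit:
  assumes "(c has_real_derivative c') (at a)" "(q \<longlongrightarrow> D) (at_left 0)"
    and "\<forall>\<^sub>F h in at_left 0. (c (a + h) - c a) / h \<le> q h"
  shows "c' \<le> D"
proof -
  have "((\<lambda>h. (c (a + h) - c a) / h) \<longlongrightarrow> c') (at_left 0)"
    using assms(1) by (simp add: DERIV_def filterlim_at_split)
  from tendsto_le[OF _ assms(2) this assms(3)] show ?thesis by simp
qed

lemma set_integral_le_by_ratio_bound:
  fixes p q s :: "real \<Rightarrow> real"
  assumes "set_integrable M S (\<lambda>x. q x * s x)" "set_integrable M S (\<lambda>x. s x * p x)"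
    and "\<forall>x\<in>S. 0 < p x" "\<forall>x\<in>S. 0 \<le> s x * p x" "\<forall>x\<in>S. q x / p x \<le> G"
  shows "set_lebesgue_integral M S (\<lambda>x. q x * s x) \<le> G * set_lebesgue_integral M S (\<lambda>x. s x * p x)"
proof -
  have "set_lebesgue_integral M S (\<lambda>x. q x * s x) \<le> set_lebesgue_integral M S (\<lambda>x. G * (s x * p x))"
  proof (rule set_integral_mono)
    fix x assume "x \<in> S"
    then have "q x * s x = q x / p x * (s x * p x)" "0 \<le> s x * p x" "q x / p x \<le> G"
      using assms(3-5) by auto
    then show "q x * s x \<le> G * (s x * p x)" by (metis mult_right_mono)
  qed (use assms(1,2) in auto)
  then show ?thesis by simp
qed

(* Only efforts below a are compared: L is nondecreasing, so the support at a lies in the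
   support at a + h for h < 0 and integrating over it underestimates the payment at a + h. *)
lemma marginal_cost_le_marginal_pay:
  assumes s: "contract s" and IC: "IC L xbar f c s a" and EA: "EA L xbar f c s a = ereal u"
    and a: "0 < a"
    and L_nonneg: "\<forall>b\<ge>0. 0 \<le> L b" and L_mono: "mono_on {0..} L"
    and f_meas: "\<forall>b\<ge>0. (\<lambda>x. f x b) \<in> borel_measurable borel"
    and f_pos: "\<forall>b\<ge>0. \<forall>x\<in>supp L xbar b. 0 < f x b"
    and c_deriv: "(c has_real_derivative c') (at a)"
    and lim: "((\<lambda>h. set_lebesgue_integral lborel (supp L xbar a)
                      (\<lambda>x. (f x (a + h) - f x a) / h * s x)) \<longlongrightarrow> D) (at_left 0)"
  shows "c' \<le> D"
proof -
  let ?S = "supp L xbar a"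
  define I where "I b = set_lebesgue_integral lborel ?S (\<lambda>x. s x * f x b)" for b
  have pay_finite: "pay L xbar f s b < \<infinity>" if "0 \<le> b" for b
    using pay_le_if_IC[OF IC EA that] by (auto intro: le_less_trans)
  have I_le: "set_integrable lborel ?S (\<lambda>x. s x * f x b) \<and> I b \<le> u + c b"
    if "0 \<le> b" "b \<le> a" for b
  proof -
    have "?S \<subseteq> supp L xbar b"
      using L_mono that a by (intro supp_antimono mono_onD[of _ L]) auto
    note bound = set_integral_le_pay[OF s _ _ _ pay_finite supp_borel this]
    have "ereal (I b) \<le> ereal (u + c b)"
      using bound(2) pay_le_if_IC[OF IC EA that(1)] L_nonneg f_meas f_pos that
      unfolding I_def by (meson order_trans)
    then show ?thesis using bound(1) L_nonneg f_meas f_pos that by auto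
  qed
  have I_a: "I a = u + c a"
  proof -
    from pay_eq_if_EA_eq[OF EA] show ?thesis
      using pay_eq_set_integral[OF s _ _ _ pay_finite] L_nonneg f_meas f_pos a
      unfolding I_def by fastforce
  qed
  have quotient_le: "(c (a + h) - c a) / h
      \<le> set_lebesgue_integral lborel ?S (\<lambda>x. (f x (a + h) - f x a) / h * s x)"
    if h: "-a < h" "h < 0" for h
  proof -
    have "(\<lambda>x. (f x (a + h) - f x a) / h * s x) = (\<lambda>x. (s x * f x (a + h) - s x * f x a) / h)"
      by (auto simp: fun_eq_iff algebra_simps diff_divide_distrib)
    then have "set_lebesgue_integral lborel ?S (\<lambda>x. (f x (a + h) - f x a) / h * s x)
        = (I (a + h) - I a) / h"
      using I_le[of "a + h"] I_le[of a] h a unfolding I_def by simp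
    moreover have "I (a + h) - I a \<le> c (a + h) - c a"
      using I_le[of "a + h"] I_a h by simp
    ultimately show ?thesis using h by (simp add: divide_right_mono_neg)
  qed
  have "\<forall>\<^sub>F h in at_left 0. h \<in> {-a<..<0}"
    using eventually_at_left_real[of "-a" 0] a by simp
  then have "\<forall>\<^sub>F h in at_left 0. (c (a + h) - c a) / h
      \<le> set_lebesgue_integral lborel ?S (\<lambda>x. (f x (a + h) - f x a) / h * s x)"
    by (rule eventually_mono) (metis greaterThanLessThan_iff quotient_le)
  then show ?thesis by (rule has_real_derivative_le_left_limit[OF c_deriv lim])
qed

lemma has_real_derivative_at_if_within_Ici:
  "(f has_real_derivative D) (at x within {a..}) \<Longrightarrow> a < x \<Longrightarrow> (f has_real_derivative D) (at x)"
  using at_within_interior[of x "{a..}"] by (simp add: interior_Ici)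

lemma pos_if_deriv_pos_Ici:
  fixes c cd :: "real \<Rightarrow> real"
  assumes c_deriv: "\<forall>a\<ge>0. (c has_real_derivative cd a) (at a within {0..})"
    and cd_pos: "\<forall>a\<ge>0. 0 < cd a" and "0 \<le> c 0" "0 < a"
  shows "0 < c a"
proof -
  have "c 0 < c a"
  proof (rule DERIV_pos_imp_increasing_open[OF \<open>0 < a\<close>])
    show "continuous_on {0..a} c"
      using c_deriv by (intro DERIV_continuous_on[where D = cd]) (auto intro: has_field_derivative_subset)
  next
    fix x :: real assume "0 < x" "x < a"
    then show "\<exists>y. (c has_real_derivative y) (at x) \<and> 0 < y"
      using c_deriv cd_pos has_real_derivative_at_if_within_Ici[of c "cd x" x 0] by auto
  qed
  with \<open>0 \<le> c 0\<close> show ?thesis by simp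
qed

lemma marginal_cost_le_likelihood_ratio_bound:
  assumes s: "contract s" and IC: "IC L xbar f c s a" and EA: "EA L xbar f c s a = ereal u"
    and a: "0 < a"
    and L_nonneg: "\<forall>b\<ge>0. 0 \<le> L b" and L_mono: "mono_on {0..} L"
    and f_meas: "\<forall>b\<ge>0. (\<lambda>x. f x b) \<in> borel_measurable borel"
    and f_pos: "\<forall>b\<ge>0. \<forall>x\<in>supp L xbar b. 0 < f x b"
    and c_deriv: "(c has_real_derivative c') (at a)" and "0 < c'"
    and G: "(SUP x\<in>supp L xbar a. ereal (fa x a / f x a)) = ereal G"
    and lim: "((\<lambda>h. set_lebesgue_integral lborel (supp L xbar a)
                      (\<lambda>x. (f x (a + h) - f x a) / h * s x))
               \<longlongrightarrow> set_lebesgue_integral lborel (supp L xbar a) (\<lambda>x. fa x a * s x)) (at_left 0)"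
  shows "c' \<le> G * (c a + u)"
proof -
  let ?S = "supp L xbar a"
  let ?D = "set_lebesgue_integral lborel ?S (\<lambda>x. fa x a * s x)"
  have pay_a: "pay L xbar f s a = ereal (u + c a)" by (rule pay_eq_if_EA_eq[OF EA])
  have "c' \<le> ?D"
    using s IC EA a L_nonneg L_mono f_meas f_pos c_deriv lim
    by (intro marginal_cost_le_marginal_pay[where s = s]) auto
  have D_int: "set_integrable lborel ?S (\<lambda>x. fa x a * s x)"
  proof (rule ccontr)
    assume "\<not> set_integrable lborel ?S (\<lambda>x. fa x a * s x)"
    then have "?D = 0"
      by (simp add: set_integrable_def set_lebesgue_integral_def not_integrable_integral_eq)
    with \<open>c' \<le> ?D\<close> \<open>0 < c'\<close> show False by simp
  qed
  have "?D \<le> G * set_lebesgue_integral lborel ?S (\<lambda>x. s x * f x a)"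
  proof (rule set_integral_le_by_ratio_bound[of _ _ "\<lambda>x. fa x a"])
    show "set_integrable lborel ?S (\<lambda>x. s x * f x a)"
      using set_integral_le_pay(1)[of s L a f xbar ?S] s pay_a L_nonneg f_meas f_pos a by auto
    show "\<forall>x\<in>?S. fa x a / f x a \<le> G"
    proof
      fix x assume "x \<in> ?S"
      then have "ereal (fa x a / f x a) \<le> (SUP x\<in>?S. ereal (fa x a / f x a))"
        by (rule SUP_upper)
      with G show "fa x a / f x a \<le> G" by simp
    qed
    show "\<forall>x\<in>?S. 0 \<le> s x * f x a"
      using payoff_nonneg[of s L a xbar f] s L_nonneg f_pos a by simp
  qed (use D_int f_pos a in auto)
  also have "set_lebesgue_integral lborel ?S (\<lambda>x. s x * f x a) = c a + u"
    using pay_eq_set_integral[of s L a f xbar] s pay_a L_nonneg f_meas f_pos a by auto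
  finally show ?thesis using \<open>c' \<le> ?D\<close> by linarith
qed

lemma implementable_subset_Jset:
  assumes L_nonneg: "\<forall>a\<ge>0. 0 \<le> L a" and L_mono: "mono_on {0..} L"
    and c_deriv: "\<forall>a>0. (c has_real_derivative cd a) (at a)"
    and cd_pos: "\<forall>a>0. 0 < cd a" and c_pos: "\<forall>a>0. 0 < c a"
    and f_meas: "\<forall>a\<ge>0. (\<lambda>x. f x a) \<in> borel_measurable borel"
    and f_pos: "\<forall>a\<ge>0. \<forall>x\<in>supp L xbar a. 0 < f x a"
    and g: "\<forall>a>0. (SUP x\<in>supp L xbar a. ereal (fa x a / f x a)) = ereal (g a)"
    and SA_iv: "\<forall>s a. contract s \<longrightarrow> 0 < a \<longrightarrow> pay L xbar f s a < \<infinity> \<longrightarrow>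
                  ((\<lambda>h. set_lebesgue_integral lborel (supp L xbar a)
                           (\<lambda>x. (f x (a + h) - f x a) / h * s x))
                   \<longlongrightarrow> set_lebesgue_integral lborel (supp L xbar a) (\<lambda>x. fa x a * s x))
                  (at_left 0)"
    and u0: "0 \<le> u0"
  shows "implementable_set L xbar f c u0 \<subseteq> Jset L xbar f fa c cd u0"
proof clarify
  fix a u assume "(a, u) \<in> implementable_set L xbar f c u0"
  then obtain s where s: "contract s" and IC: "IC L xbar f c s a"
    and IR: "ereal u0 \<le> EA L xbar f c s a" and EA: "EA L xbar f c s a = ereal u"
    by (auto simp: implementable_set_def implements_def feasible_def IR_def)
  have "0 \<le> a" and "u0 \<le> u" using IC IR EA by (auto simp: IC_def)
  show "(a, u) \<in> Jset L xbar f fa c cd u0"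
  proof (cases "a = 0")
    case True
    with \<open>u0 \<le> u\<close> show ?thesis by (auto simp: Jset_def)
  next
    case False
    with \<open>0 \<le> a\<close> have a: "0 < a" by simp
    have "pay L xbar f s a < \<infinity>" using pay_eq_if_EA_eq[OF EA] by simp
    then have "cd a \<le> g a * (c a + u)"
      using s IC EA a L_nonneg L_mono f_meas f_pos c_deriv cd_pos g SA_iv
      by (intro marginal_cost_le_likelihood_ratio_bound[where s = s and fa = fa]) auto
    moreover have "0 < c a + u" using c_pos a u0 \<open>u0 \<le> u\<close> by force
    ultimately have "cd a / (c a + u) \<le> g a" by (simp add: pos_divide_le_eq)
    with a \<open>u0 \<le> u\<close> g show ?thesis by (auto simp: Jset_def)
  qed
qed

lemma less_outside_Icc_if_tendsto_bot:
  fixes h :: "real \<Rightarrow> real"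
  assumes h_cont: "continuous_on {0..} h" and h_lim: "filterlim h at_bot at_top"
    and "h 0 < t" "0 < a1"
  shows "\<exists>\<delta> M. 0 < \<delta> \<and> \<delta> \<le> a1 \<and> a1 \<le> M \<and> (\<forall>a>0. a \<notin> {\<delta>..M} \<longrightarrow> h a < t)"
proof -
  obtain M where M: "\<forall>a\<ge>M. h a < t"
    using h_lim by (auto simp: filterlim_at_bot_dense eventually_at_top_linorder)
  have "(h \<longlongrightarrow> h 0) (at 0 within {0..})"
    using h_cont by (simp add: continuous_on_eq_continuous_within continuous_within)
  then have "\<forall>\<^sub>F a in at 0 within {0..}. h a < t"
    using \<open>h 0 < t\<close> by (rule order_tendstoD(2))
  then obtain d where "0 < d" and d: "\<forall>a\<in>{0..}. a \<noteq> 0 \<and> dist a 0 < d \<longrightarrow> h a < t"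
    by (auto simp: eventually_at)
  show ?thesis
  proof (intro exI conjI allI impI)
    show "0 < min d a1" "min d a1 \<le> a1" "a1 \<le> max M a1"
      using \<open>0 < d\<close> \<open>0 < a1\<close> by auto
    fix a :: real assume "0 < a" "a \<notin> {min d a1..max M a1}"
    then consider "a < d" | "M \<le> a" by force
    then show "h a < t"
    proof cases
      case 1
      then show ?thesis using d \<open>0 < a\<close> by (simp add: dist_real_def)
    next
      case 2
      then show ?thesis using M by blast
    qed
  qed
qed

lemma diff_quotient_less_if_denominator_small:
  fixes m n g :: "real \<Rightarrow> real"
  assumes "compact I" "continuous_on I m" "continuous_on I n" "\<forall>a\<in>I. 0 < n a"
  shows "\<exists>\<epsilon>>0. \<forall>a\<in>I. 0 < g a \<longrightarrow> g a < \<epsilon> \<longrightarrow> m a - n a / g a < r"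
proof (cases "I = {}")
  case True
  then show ?thesis using zero_less_one by blast
next
  case False
  obtain aB where "aB \<in> I" and m_max: "\<forall>a\<in>I. m a \<le> m aB"
    using continuous_attains_sup[OF assms(1) False assms(2)] by blast
  obtain aC where "aC \<in> I" and n_min: "\<forall>a\<in>I. n aC \<le> n a"
    using continuous_attains_inf[OF assms(1) False assms(3)] by blast
  define \<epsilon> where "\<epsilon> = n aC / (\<bar>m aB - r\<bar> + 1)"
  have n_pos: "0 < n aC" using assms(4) \<open>aC \<in> I\<close> by blast
  show ?thesis
  proof (intro exI conjI ballI impI)
    show "0 < \<epsilon>" using n_pos by (simp add: \<epsilon>_def)
    fix a assume "a \<in> I" "0 < g a" "g a < \<epsilon>"
    have "\<bar>m aB - r\<bar> + 1 = n aC / \<epsilon>" using n_pos by (simp add: \<epsilon>_def)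
    also have "\<dots> < n aC / g a"
      using \<open>0 < g a\<close> \<open>g a < \<epsilon>\<close> n_pos by (intro divide_strict_left_mono) auto
    also have "\<dots> \<le> n a / g a"
      using n_min \<open>a \<in> I\<close> \<open>0 < g a\<close> by (simp add: divide_right_mono)
    finally have "\<bar>m aB - r\<bar> + 1 < n a / g a" .
    moreover have "m a \<le> m aB" using m_max \<open>a \<in> I\<close> by blast
    ultimately show "m a - n a / g a < r" using abs_ge_self[of "m aB - r"] by linarith
  qed
qed

(* Objective of the relaxed problem at effort a and the least rent admissible in J,
   where g a is the supremum of f_a / f over the support. *)
definition relaxed_value ::
    "(real \<Rightarrow> real) \<Rightarrow> (real \<Rightarrow> real) \<Rightarrow> (real \<Rightarrow> real) \<Rightarrow> (real \<Rightarrow> real) \<Rightarrow> real \<Rightarrow> real \<Rightarrow> real"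
  where "relaxed_value m c cd g u0 a = min (m a - c a - u0) (m a - cd a / g a)"

lemma continuous_attains_max_if_below_outside:
  fixes \<phi> :: "'a::topological_space \<Rightarrow> real"
  assumes "compact K" "continuous_on K \<phi>" "a1 \<in> K" "K \<subseteq> A"
    and below: "\<forall>a\<in>A - K. \<phi> a \<le> \<phi> a1"
  shows "\<exists>a\<in>K. \<forall>a'\<in>A. \<phi> a' \<le> \<phi> a"
proof -
  obtain a where "a \<in> K" and a_max: "\<forall>a'\<in>K. \<phi> a' \<le> \<phi> a"
    using continuous_attains_sup[OF assms(1) _ assms(2)] \<open>a1 \<in> K\<close> by blast
  then have "\<forall>a'\<in>A. \<phi> a' \<le> \<phi> a"
    using below \<open>a1 \<in> K\<close> by (metis Diff_iff order_trans)
  with \<open>a \<in> K\<close> show ?thesis by blast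
qed

lemma relaxed_value_attains_max:
  fixes m c cd g :: "real \<Rightarrow> real" and u0 :: real
  assumes m_cont: "continuous_on {0..} m" and c_cont: "continuous_on {0..} c"
    and cd_cont: "continuous_on {0..} cd" and g_cont: "continuous_on {0<..} g"
    and cd_pos: "\<forall>a\<ge>0. 0 < cd a"
    and lim: "filterlim (\<lambda>a. m a - c a) at_bot at_top"
    and a1: "0 < a1" "0 < g a1" "m 0 - c 0 - u0 < relaxed_value m c cd g u0 a1"
  shows "\<exists>a\<in>{a. 0 < a \<and> 0 < g a}. \<forall>a'\<in>{a. 0 < a \<and> 0 < g a}.
           relaxed_value m c cd g u0 a' \<le> relaxed_value m c cd g u0 a"
proof -
  let ?\<phi> = "relaxed_value m c cd g u0"
  have "continuous_on {0..} (\<lambda>a. m a - c a)"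
    using m_cont c_cont by (intro continuous_intros)
  then obtain \<delta> M where "0 < \<delta>" "\<delta> \<le> a1" "a1 \<le> M"
    and outside: "\<forall>a>0. a \<notin> {\<delta>..M} \<longrightarrow> m a - c a < ?\<phi> a1 + u0"
    using less_outside_Icc_if_tendsto_bot[OF _ lim _ a1(1), of "?\<phi> a1 + u0"] a1(3) by auto
  have Icc_pos: "{\<delta>..M} \<subseteq> {0<..}" using \<open>0 < \<delta>\<close> by auto
  then have Icc_nonneg: "{\<delta>..M} \<subseteq> {0..}" by auto
  obtain \<epsilon> where "0 < \<epsilon>"
    and small: "\<forall>a\<in>{\<delta>..M}. 0 < g a \<longrightarrow> g a < \<epsilon> \<longrightarrow> m a - cd a / g a < ?\<phi> a1"
    using diff_quotient_less_if_denominator_small[OF compact_Icc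
        continuous_on_subset[OF m_cont Icc_nonneg] continuous_on_subset[OF cd_cont Icc_nonneg]]
      cd_pos Icc_nonneg by blast
  define K where "K = {\<delta>..M} \<inter> g -` {\<epsilon>..}"
  have "closed K" unfolding K_def
    by (rule continuous_closed_preimage[OF continuous_on_subset[OF g_cont Icc_pos]]) auto
  moreover have "bounded K"
    unfolding K_def by (rule bounded_subset[OF bounded_closed_interval]) auto
  ultimately have "compact K" by (simp add: compact_eq_bounded_closed)
  have "\<epsilon> \<le> g a1"
  proof (rule ccontr)
    assume "\<not> \<epsilon> \<le> g a1"
    then have "m a1 - cd a1 / g a1 < ?\<phi> a1" using small \<open>\<delta> \<le> a1\<close> \<open>a1 \<le> M\<close> a1(2) by auto
    then show False by (simp add: relaxed_value_def)
  qed
  then have "a1 \<in> K" using \<open>\<delta> \<le> a1\<close> \<open>a1 \<le> M\<close> by (simp add: K_def)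
  have K_sub: "K \<subseteq> {0..}" "K \<subseteq> {0<..}" "\<forall>a\<in>K. g a \<noteq> 0" "K \<subseteq> {a. 0 < a \<and> 0 < g a}"
    using Icc_pos \<open>0 < \<epsilon>\<close> unfolding K_def by auto
  have "continuous_on K ?\<phi>"
    unfolding relaxed_value_def using K_sub
    by (intro continuous_intros continuous_on_subset[OF m_cont] continuous_on_subset[OF c_cont]
        continuous_on_subset[OF cd_cont] continuous_on_subset[OF g_cont]) auto
  moreover have "?\<phi> a \<le> ?\<phi> a1" if "a \<in> {a. 0 < a \<and> 0 < g a} - K" for a
  proof (cases "a \<in> {\<delta>..M}")
    case False
    then have "m a - c a < ?\<phi> a1 + u0" using outside that by blast
    moreover have "?\<phi> a \<le> m a - c a - u0" by (simp add: relaxed_value_def)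
    ultimately show ?thesis by linarith
  next
    case True
    then have "m a - cd a / g a < ?\<phi> a1" using small that by (auto simp: K_def)
    moreover have "?\<phi> a \<le> m a - cd a / g a" by (simp add: relaxed_value_def)
    ultimately show ?thesis by linarith
  qed
  ultimately obtain a where "a \<in> K" "\<forall>a'\<in>{a. 0 < a \<and> 0 < g a}. ?\<phi> a' \<le> ?\<phi> a"
    using continuous_attains_max_if_below_outside[OF \<open>compact K\<close> _ \<open>a1 \<in> K\<close> K_sub(4), of ?\<phi>]
    by blast
  with K_sub(4) show ?thesis by blast
qed

lemma mem_Jset_zero_iff: "(0, u) \<in> Jset L xbar f fa c cd u0 \<longleftrightarrow> u0 \<le> u"
  by (auto simp: Jset_def)

lemma mem_Jset_pos_iff:
  assumes g: "(SUP x\<in>supp L xbar a. ereal (fa x a / f x a)) = ereal (g a)"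
    and "0 < a" "0 < cd a" "0 < c a" "0 \<le> u0"
  shows "(a, u) \<in> Jset L xbar f fa c cd u0 \<longleftrightarrow> 0 < g a \<and> max u0 (cd a / g a - c a) \<le> u"
proof -
  have "(a, u) \<in> Jset L xbar f fa c cd u0 \<longleftrightarrow> u0 \<le> u \<and> cd a / (c a + u) \<le> g a"
    using g \<open>0 < a\<close> by (auto simp: Jset_def)
  also have "\<dots> \<longleftrightarrow> 0 < g a \<and> max u0 (cd a / g a - c a) \<le> u"
  proof (cases "u0 \<le> u")
    case True
    then have "0 < c a + u" using assms(4,5) by linarith
    then have "cd a / (c a + u) \<le> g a \<longleftrightarrow> cd a \<le> g a * (c a + u)"
      by (simp add: pos_divide_le_eq)
    also have "\<dots> \<longleftrightarrow> 0 < g a \<and> cd a / g a \<le> c a + u"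
      using \<open>0 < c a + u\<close> \<open>0 < cd a\<close>
      by (smt (verit, best) mult_nonpos_nonneg pos_divide_le_eq mult.commute)
    finally show ?thesis using True by auto
  qed simp
  finally show ?thesis .
qed

lemma Jset_value_le:
  assumes g_sup: "\<forall>a>0. (SUP x\<in>supp L xbar a. ereal (fa x a / f x a)) = ereal (g a)"
    and cd_pos: "\<forall>a>0. 0 < cd a" and c_pos: "\<forall>a>0. 0 < c a" and u0: "0 \<le> u0"
    and au: "(a, u) \<in> Jset L xbar f fa c cd u0"
  shows "a = 0 \<and> m a - c a - u \<le> m 0 - c 0 - u0
    \<or> 0 < a \<and> 0 < g a \<and> m a - c a - u \<le> relaxed_value m c cd g u0 a"
proof (cases "a = 0")
  case True
  then show ?thesis using au by (simp add: mem_Jset_zero_iff)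
next
  case False
  then have "0 < a" using au by (auto simp: Jset_def)
  then have "0 < g a \<and> max u0 (cd a / g a - c a) \<le> u"
    using au mem_Jset_pos_iff[where L = L and xbar = xbar and f = f and fa = fa and g = g]
      g_sup cd_pos c_pos u0 by simp
  with \<open>0 < a\<close> show ?thesis by (auto simp: relaxed_value_def)
qed

lemma Jset_has_maximizer:
  assumes g_sup: "\<forall>a>0. (SUP x\<in>supp L xbar a. ereal (fa x a / f x a)) = ereal (g a)"
    and g_cont: "continuous_on {0<..} g"
    and m_cont: "continuous_on {0..} (mean L xbar f)" and c_cont: "continuous_on {0..} c"
    and cd_cont: "continuous_on {0..} cd"
    and cd_pos: "\<forall>a\<ge>0. 0 < cd a" and c_pos: "\<forall>a>0. 0 < c a"
    and lim: "filterlim (\<lambda>a. mean L xbar f a - c a) at_bot at_top"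
    and u0: "0 \<le> u0"
  shows "\<exists>(a, u)\<in>Jset L xbar f fa c cd u0. \<forall>(a', u')\<in>Jset L xbar f fa c cd u0.
           mean L xbar f a' - c a' - u' \<le> mean L xbar f a - c a - u"
proof -
  let ?m = "mean L xbar f" and ?J = "Jset L xbar f fa c cd u0"
  let ?\<phi> = "relaxed_value ?m c cd g u0"
  have value_le: "a = 0 \<and> ?m a - c a - u \<le> ?m 0 - c 0 - u0
      \<or> 0 < a \<and> 0 < g a \<and> ?m a - c a - u \<le> ?\<phi> a" if "(a, u) \<in> ?J" for a u
    using Jset_value_le[OF g_sup _ c_pos u0 that] cd_pos by simp
  show ?thesis
  proof (cases "\<exists>a1>0. 0 < g a1 \<and> ?m 0 - c 0 - u0 < ?\<phi> a1")
    case True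
    then obtain a1 where a1: "0 < a1" "0 < g a1" "?m 0 - c 0 - u0 < ?\<phi> a1" by blast
    then obtain a where a: "0 < a" "0 < g a" and a_max: "\<forall>a'>0. 0 < g a' \<longrightarrow> ?\<phi> a' \<le> ?\<phi> a"
      using relaxed_value_attains_max[OF m_cont c_cont cd_cont g_cont cd_pos lim a1] by auto
    have "(a, max u0 (cd a / g a - c a)) \<in> ?J"
      using mem_Jset_pos_iff[where L = L and xbar = xbar and f = f and fa = fa and g = g]
        g_sup cd_pos c_pos u0 a by simp
    moreover have "?m a - c a - max u0 (cd a / g a - c a) = ?\<phi> a"
      by (auto simp: relaxed_value_def min_def max_def)
    moreover have "?m a' - c a' - u' \<le> ?\<phi> a" if "(a', u') \<in> ?J" for a' u'
      using value_le[OF that] a1 a_max by force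
    ultimately show ?thesis by (intro bexI[where x = "(a, max u0 (cd a / g a - c a))"]) auto
  next
    case False
    then have "?m a' - c a' - u' \<le> ?m 0 - c 0 - u0" if "(a', u') \<in> ?J" for a' u'
      using value_le[OF that] by force
    moreover have "(0, u0) \<in> ?J" by (simp add: mem_Jset_zero_iff)
    ultimately show ?thesis by (intro bexI[where x = "(0, u0)"]) auto
  qed
qed

lemma EP_eq_if_EA_eq:
  "EA L xbar f c s a = ereal u \<Longrightarrow> EP L xbar f s a = ereal (mean L xbar f a - c a - u)"
  by (simp add: EP_def pay_eq_if_EA_eq)

lemma OP_optimal_if_implements_relaxed_maximizer:
  assumes relaxed: "implementable_set L xbar f c u0 \<subseteq> J"
    and max: "\<forall>(a', u')\<in>J. mean L xbar f a' - c a' - u' \<le> mean L xbar f a - c a - u"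
    and impl: "implements L xbar f c u0 s a u"
  shows "OP_optimal L xbar f c u0 s a"
  unfolding OP_optimal_def
proof (intro conjI allI impI)
  show "feasible L xbar f c u0 s a" using impl by (simp add: implements_def)
  fix s' a' assume feasible: "feasible L xbar f c u0 s' a'"
  have EP: "EP L xbar f s a = ereal (mean L xbar f a - c a - u)"
    using impl by (simp add: implements_def EP_eq_if_EA_eq)
  show "EP L xbar f s' a' \<le> EP L xbar f s a"
  proof (cases "pay L xbar f s' a'")
    case (real p)
    then have "implements L xbar f c u0 s' a' (p - c a')"
      using feasible by (simp add: implements_def EA_def)
    then have "(a', p - c a') \<in> J" using relaxed by (auto simp: implementable_set_def)
    with max have "mean L xbar f a' - c a' - (p - c a') \<le> mean L xbar f a - c a - u" by blast
    then show ?thesis using real EP by (simp add: EP_def)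
  qed (auto simp: EP_def pay_def)
qed

theorem theorem1:
  fixes L L' :: "real \<Rightarrow> real" and xbar :: ereal
    and f fa Fa :: "real \<Rightarrow> real \<Rightarrow> real"
    and c cd cdd :: "real \<Rightarrow> real" and u0 :: real
  assumes xbar_pos: "0 < xbar"
    and L_range: "\<forall>a\<ge>0. 0 \<le> L a \<and> ereal (L a) < xbar"
    and L_mono: "mono_on {0..} L"
    and L_C1: "\<forall>a>0. (L has_real_derivative L' a) (at a)" "continuous_on {0<..} L'"
    and c_nonneg: "\<forall>a\<ge>0. 0 \<le> c a"
    and c_deriv: "\<forall>a\<ge>0. (c has_real_derivative cd a) (at a within {0..})"
    and cd_deriv: "\<forall>a\<ge>0. (cd has_real_derivative cdd a) (at a within {0..})"
    and cd_pos: "\<forall>a\<ge>0. 0 < cd a"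
    and cdd_nonneg: "\<forall>a\<ge>0. 0 \<le> cdd a"
    and f_meas: "\<forall>a\<ge>0. (\<lambda>x. f x a) \<in> borel_measurable borel"
    and f_pos: "\<forall>a\<ge>0. \<forall>x\<in>supp L xbar a. 0 < f x a"
    and f_density: "\<forall>a\<ge>0. set_integrable lborel (supp L xbar a) (\<lambda>x. f x a)
                        \<and> set_lebesgue_integral lborel (supp L xbar a) (\<lambda>x. f x a) = 1"
    and f_diff: "\<forall>a>0. \<forall>x\<in>supp L xbar a. ((\<lambda>b. f x b) has_real_derivative fa x a) (at a)"
    and F_diff: "\<forall>a>0. \<forall>x\<in>supp L xbar a. ((\<lambda>b. cdf L f x b) has_real_derivative Fa x a) (at a)"
    and fa_cont: "continuous_on {(x, a). 0 < a \<and> x \<in> supp L xbar a} (\<lambda>(x, a). fa x a)"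
    and Fa_cont: "continuous_on {(x, a). 0 < a \<and> x \<in> supp L xbar a} (\<lambda>(x, a). Fa x a)"
    and Fa_neg: "\<forall>a>0. \<forall>x\<in>supp L xbar a. Fa x a < 0"
    and SA_i: "\<forall>a\<ge>0. set_integrable lborel (supp L xbar a) (\<lambda>x. x * f x a)"
              "continuous_on {0..} (mean L xbar f)"
    and SA_ii: "filterlim (\<lambda>a. mean L xbar f a - c a) at_bot at_top"
    and SA_iii: "\<exists>g. continuous_on {0<..} g \<and>
                   (\<forall>a>0. (SUP x\<in>supp L xbar a. ereal (fa x a / f x a)) = ereal (g a))"
    and SA_iv: "\<forall>s a. contract s \<longrightarrow> 0 < a \<longrightarrow> pay L xbar f s a < \<infinity> \<longrightarrow>
                  ((\<lambda>h. set_lebesgue_integral lborel (supp L xbar a)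
                           (\<lambda>x. (f x (a + h) - f x a) / h * s x))
                   \<longlongrightarrow> set_lebesgue_integral lborel (supp L xbar a) (\<lambda>x. fa x a * s x))
                  (at_left 0)"
    and u0_nonneg: "0 \<le> u0"
  shows "implementable_set L xbar f c u0 \<subseteq> Jset L xbar f fa c cd u0
    \<and> (\<exists>(a, u)\<in>Jset L xbar f fa c cd u0. \<forall>(a', u')\<in>Jset L xbar f fa c cd u0.
          mean L xbar f a' - c a' - u' \<le> mean L xbar f a - c a - u)
    \<and> (\<forall>a u. (a, u) \<in> Jset L xbar f fa c cd u0 \<longrightarrow>
          (\<forall>(a', u')\<in>Jset L xbar f fa c cd u0.
              mean L xbar f a' - c a' - u' \<le> mean L xbar f a - c a - u) \<longrightarrow>
          (\<forall>s. implements L xbar f c u0 s a u \<longrightarrow> OP_optimal L xbar f c u0 s a))"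
proof -
  obtain g where g_cont: "continuous_on {0<..} g"
    and g_sup: "\<forall>a>0. (SUP x\<in>supp L xbar a. ereal (fa x a / f x a)) = ereal (g a)"
    using SA_iii by blast
  have c_pos: "\<forall>a>0. 0 < c a"
    using pos_if_deriv_pos_Ici[OF c_deriv cd_pos] c_nonneg by simp
  have c_cont: "continuous_on {0..} c"
    using c_deriv by (intro DERIV_continuous_on[where D = cd]) auto
  have cd_cont: "continuous_on {0..} cd"
    using cd_deriv by (intro DERIV_continuous_on[where D = cdd]) auto
  have "\<forall>a>0. (c has_real_derivative cd a) (at a)"
    using c_deriv has_real_derivative_at_if_within_Ici[of c _ _ 0] by simp
  moreover have "\<forall>a\<ge>0. 0 \<le> L a" using L_range by simp
  ultimately have relaxed: "implementable_set L xbar f c u0 \<subseteq> Jset L xbar f fa c cd u0"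
    using implementable_subset_Jset[OF _ L_mono _ _ c_pos f_meas f_pos g_sup SA_iv u0_nonneg] cd_pos
    by simp
  show ?thesis
    using relaxed OP_optimal_if_implements_relaxed_maximizer[OF relaxed]
      Jset_has_maximizer[OF g_sup g_cont SA_i(2) c_cont cd_cont cd_pos c_pos SA_ii u0_nonneg]
    by blast
qed

end
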